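(* Let $H_2$ be the graph with vertex set $\{0,1,2,3,4,5,u_1,u_2\}$ and edge set $\{01,03,04,05,12,13,14,15,23,24,25,34,45,\ 3u_1,4u_1,5u_1,\ 3u_2,4u_2,5u_2\}$, and for $r\ge 2$ let $H_r$ be obtained from $H_2$ by adding vertices $u_3,\dots,u_r$, each adjacent exactly to $3,4,5$ (so $N(u_k)=N(u_1)=\{3,4,5\}$ for all $k$). Then for $r\ge 2$, $\operatorname{Z}(H_r)=r+2$, $\underline{z_0}(H_r)=r+3$, and $z_0(H_r)=r+5$.
   Context: Zero forcing on a graph $G$: starting with a set $S$ of blue vertices (others white), a blue vertex $v$ may change a white vertex $w$ to blue if $w$ is the only white neighbor of $v$. $S$ is a zero forcing set if repeated application colors all of $V(G)$ blue. $\operatorname{Z}(G)$ is the minimum size of a zero forcing set. $\mathscr{Z}^{\rm TAR}(G)$ has vertices the zero forcing sets of $G$, two adjacent iff their symmetric difference has size 1; $\mathscr{Z}^{\rm TAR}_k(G)$ is its subgraph induced by zero forcing sets of size at most $k$. $\underline{z_0}(G)$ is the least $k$ with $\mathscr{Z}^{\rm TAR}_k(G)$ connected; $z_0(G)$ is the least $k$ such that $\mathscr{Z}^{\rm TAR}_i(G)$ is connected for every $i=k,\dots,|V(G)|$. *)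

theory Defs
  imports Main
begin

(* A simple graph is given by a vertex set V and an edge set E of 2-element sets. *)

inductive zf_blue :: "'a set \<Rightarrow> 'a set set \<Rightarrow> 'a set \<Rightarrow> 'a \<Rightarrow> bool"
  for V :: "'a set" and E :: "'a set set" and S :: "'a set" where
  init: "v \<in> S \<Longrightarrow> zf_blue V E S v"
| force: "\<lbrakk> u \<in> V; w \<in> V; zf_blue V E S u; {u, w} \<in> E;
            \<forall>x\<in>V. {u, x} \<in> E \<and> x \<noteq> w \<longrightarrow> zf_blue V E S x \<rbrakk>
          \<Longrightarrow> zf_blue V E S w"

definition zero_forcing_set :: "'a set \<Rightarrow> 'a set set \<Rightarrow> 'a set \<Rightarrow> bool" where
  "zero_forcing_set V E S \<longleftrightarrow> S \<subseteq> V \<and> (\<forall>v\<in>V. zf_blue V E S v)"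

definition zf_number :: "'a set \<Rightarrow> 'a set set \<Rightarrow> nat" where
  "zf_number V E = (LEAST k. \<exists>S. zero_forcing_set V E S \<and> card S = k)"

definition tar_vertices :: "'a set \<Rightarrow> 'a set set \<Rightarrow> nat \<Rightarrow> 'a set set" where
  "tar_vertices V E k = {S. zero_forcing_set V E S \<and> card S \<le> k}"

definition tar_adj :: "'a set \<Rightarrow> 'a set set \<Rightarrow> nat \<Rightarrow> 'a set \<Rightarrow> 'a set \<Rightarrow> bool" where
  "tar_adj V E k S T \<longleftrightarrow> S \<in> tar_vertices V E k \<and> T \<in> tar_vertices V E k
      \<and> card ((S - T) \<union> (T - S)) = 1"

definition tar_connected :: "'a set \<Rightarrow> 'a set set \<Rightarrow> nat \<Rightarrow> bool" where
  "tar_connected V E k \<longleftrightarrow> tar_vertices V E k \<noteq> {} \<and>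
     (\<forall>S\<in>tar_vertices V E k. \<forall>T\<in>tar_vertices V E k. (tar_adj V E k)\<^sup>*\<^sup>* S T)"

definition z0_lower :: "'a set \<Rightarrow> 'a set set \<Rightarrow> nat" where
  "z0_lower V E = (LEAST k. tar_connected V E k)"

definition z0 :: "'a set \<Rightarrow> 'a set set \<Rightarrow> nat" where
  "z0 V E = (LEAST k. \<forall>i. k \<le> i \<and> i \<le> card V \<longrightarrow> tar_connected V E i)"

(* The graph H_r: vertices 0..5 are 0..5, and u_k is encoded as the natural number 5 + k
   (k = 1..r). *)
definition H_vertices :: "nat \<Rightarrow> nat set" where
  "H_vertices r = {0..5} \<union> {5 + k | k. 1 \<le> k \<and> k \<le> r}"

definition H_edges :: "nat \<Rightarrow> nat set set" where
  "H_edges r = {{0,1},{0,3},{0,4},{0,5},{1,2},{1,3},{1,4},{1,5},{2,3},{2,4},{2,5},{3,4},{4,5}}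
     \<union> {{v, 5 + k} | v k. v \<in> {3,4,5} \<and> 1 \<le> k \<and> k \<le> r}"

end

theory Submission
  imports Defs
begin

(* Lower bounds come from forts: nonempty sets F of vertices such that no vertex outside F has
   exactly one neighbour in F. No vertex of a fort can be forced before another vertex of it is
   blue, so every zero forcing set meets every fort. In H_r the twin pairs {0,2}, {3,5},
   {u_i,u_j} and the triples {4,c,m} (c in {3,5}, m in {0,1,2,u_1,...,u_r}) are forts. Hence a
   zero forcing set either contains one of 0,2, two of 3,4,5 and all but one u_i (at least r+2
   vertices, and these sets are zero forcing), or it contains 0,1,2, all u_i and one of 3,5
   (at least r+4 vertices).

   So Z(H_r) = r+2. Adjacent vertices of a reconfiguration graph differ in size, hence the
   distinct minimum sets are isolated at k = r+2. At k = r+3 every set contains a minimum set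
   and can be walked to {0,3,4,5,u_2,...,u_r} through supersets of minimum sets. At k = r+4 the
   set {0,1,2,3,u_1,...,u_r} is isolated: deleting 3 uncovers the fort {3,5}, deleting any other
   vertex m uncovers {4,5,m}. For k >= r+5 every set is reached through the sets V - {1,v},
   which are zero forcing. *)

lemma zf_blue_mono:
  assumes "zf_blue V E S v" and "S \<subseteq> T"
  shows "zf_blue V E T v"
  using assms
proof (induction rule: zf_blue.induct)
  case (init v)
  then show ?case by (blast intro: zf_blue.init)
next
  case (force u w)
  show ?case
    by (rule zf_blue.force[of u]) (use force in auto)
qed

lemma zero_forcing_set_mono:
  "zero_forcing_set V E S \<Longrightarrow> S \<subseteq> T \<Longrightarrow> T \<subseteq> V \<Longrightarrow> zero_forcing_set V E T"
  unfolding zero_forcing_set_def by (blast intro: zf_blue_mono)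

lemma zero_forcing_set_finite: "finite V \<Longrightarrow> zero_forcing_set V E S \<Longrightarrow> finite S"
  unfolding zero_forcing_set_def by (blast intro: finite_subset)

definition nbrs :: "'a set set \<Rightarrow> 'a \<Rightarrow> 'a set" where
  "nbrs E v = {w. {v, w} \<in> E}"

lemma nbrs_sym: "w \<in> nbrs E v \<longleftrightarrow> v \<in> nbrs E w"
  unfolding nbrs_def by (simp add: insert_commute)

lemma zf_blue_force_nbrs:
  assumes "\<forall>e\<in>E. e \<subseteq> V" "zf_blue V E S u" "w \<in> nbrs E u"
    and "\<And>x. x \<in> nbrs E u - {w} \<Longrightarrow> zf_blue V E S x"
  shows "zf_blue V E S w"
  by (rule zf_blue.force[of u]) (use assms in \<open>auto simp: nbrs_def\<close>)

definition fort :: "'a set \<Rightarrow> 'a set set \<Rightarrow> 'a set \<Rightarrow> bool" where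
  "fort V E F \<longleftrightarrow> F \<noteq> {} \<and> F \<subseteq> V \<and>
     (\<forall>u\<in>V - F. \<forall>w\<in>F \<inter> nbrs E u. \<exists>x\<in>F \<inter> nbrs E u. x \<noteq> w)"

lemma fortI:
  assumes "F \<noteq> {}" "F \<subseteq> V"
    and "\<And>u. u \<in> V - F \<Longrightarrow> F \<inter> nbrs E u \<noteq> {} \<Longrightarrow>
           \<exists>x y. x \<noteq> y \<and> x \<in> F \<inter> nbrs E u \<and> y \<in> F \<inter> nbrs E u"
  shows "fort V E F"
  unfolding fort_def
proof (intro conjI assms(1,2) ballI)
  fix u w assume "u \<in> V - F" "w \<in> F \<inter> nbrs E u"
  then obtain x y where "x \<noteq> y" "x \<in> F \<inter> nbrs E u" "y \<in> F \<inter> nbrs E u"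
    using assms(3) by blast
  then show "\<exists>x\<in>F \<inter> nbrs E u. x \<noteq> w" by metis
qed

lemma fort_twins:
  assumes "a \<in> V" "b \<in> V" "a \<noteq> b" "nbrs E a = nbrs E b"
  shows "fort V E {a, b}"
proof (rule fortI)
  fix u assume "u \<in> V - {a, b}" "{a, b} \<inter> nbrs E u \<noteq> {}"
  then obtain z where "z \<in> {a, b}" "u \<in> nbrs E z"
    using nbrs_sym by fastforce
  then have "u \<in> nbrs E a" "u \<in> nbrs E b"
    using assms(4) by auto
  then have "a \<in> nbrs E u" "b \<in> nbrs E u"
    using nbrs_sym by fastforce+
  with assms(3) show "\<exists>x y. x \<noteq> y \<and> x \<in> {a, b} \<inter> nbrs E u \<and> y \<in> {a, b} \<inter> nbrs E u"
    by (intro exI[of _ a] exI[of _ b]) simp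
qed (use assms in auto)

lemma zf_blue_outside_fort:
  assumes "fort V E F" "S \<inter> F = {}" "zf_blue V E S v"
  shows "v \<notin> F"
  using assms(3)
proof (induction rule: zf_blue.induct)
  case (init v)
  with assms(2) show ?case by blast
next
  case (force u w)
  show ?case
  proof
    assume "w \<in> F"
    have "u \<in> V - F" using force.hyps(1) force.IH(1) by blast
    moreover have "w \<in> F \<inter> nbrs E u" using \<open>w \<in> F\<close> force.hyps(4) unfolding nbrs_def by blast
    ultimately obtain x where x: "x \<in> F \<inter> nbrs E u" "x \<noteq> w"
      using assms(1) unfolding fort_def by blast
    have "x \<in> V" using x(1) assms(1) unfolding fort_def by blast
    with x force.IH(2) show False unfolding nbrs_def by blast
  qed
qed

lemma zero_forcing_set_meets_fort:
  assumes "zero_forcing_set V E S" "fort V E F"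
  shows "S \<inter> F \<noteq> {}"
proof
  assume disj: "S \<inter> F = {}"
  from assms(2) obtain v where "v \<in> F" "v \<in> V" unfolding fort_def by blast
  with assms(1) zf_blue_outside_fort[OF assms(2) disj] show False
    unfolding zero_forcing_set_def by blast
qed

lemma tar_adj_sym: "tar_adj V E k S T \<Longrightarrow> tar_adj V E k T S"
  unfolding tar_adj_def by (simp add: Un_commute)

lemma tar_reachable_sym:
  "(tar_adj V E k)\<^sup>*\<^sup>* S T \<Longrightarrow> (tar_adj V E k)\<^sup>*\<^sup>* T S"
  by (rule sympD[OF symp_rtranclp]) (auto intro: sympI tar_adj_sym)

lemma tar_adj_cases:
  assumes "tar_adj V E k S T"
  obtains x where "x \<in> S" "T = S - {x}" | x where "x \<notin> S" "T = insert x S"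
proof -
  from assms obtain x where "(S - T) \<union> (T - S) = {x}"
    unfolding tar_adj_def by (auto simp: card_1_singleton_iff)
  then have x: "y \<in> (S - T) \<union> (T - S) \<longleftrightarrow> y = x" for y
    by blast
  show ?thesis
  proof (cases "x \<in> S")
    case True
    have "T = S - {x}"
    proof (rule set_eqI)
      fix y
      show "y \<in> T \<longleftrightarrow> y \<in> S - {x}" using x[of y] True by blast
    qed
    with True show ?thesis by (rule that(1))
  next
    case False
    have "T = insert x S"
    proof (rule set_eqI)
      fix y
      show "y \<in> T \<longleftrightarrow> y \<in> insert x S" using x[of y] False by blast
    qed
    with False show ?thesis by (rule that(2))
  qed
qed

lemma tar_reachable_superset:
  assumes "finite V" "zero_forcing_set V E S" "S \<subseteq> T" "T \<subseteq> V" "card T \<le> k"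
  shows "(tar_adj V E k)\<^sup>*\<^sup>* S T"
proof -
  have fin: "finite T" using assms(1,4) by (rule finite_subset[rotated])
  have "(tar_adj V E k)\<^sup>*\<^sup>* S (S \<union> D)" if "D \<subseteq> T - S" for D
    using finite_subset[OF that finite_Diff[OF fin]] that
  proof (induction D rule: finite_induct)
    case empty
    show ?case by simp
  next
    case (insert x D)
    have D: "D \<subseteq> T - S" "x \<in> T - S"
      using insert.prems by auto
    have vertex: "X \<in> tar_vertices V E k" if "S \<subseteq> X" "X \<subseteq> T" for X
    proof -
      have "zero_forcing_set V E X"
        using zero_forcing_set_mono[OF assms(2) that(1)] that(2) assms(4) by blast
      moreover have "card X \<le> k"
        using card_mono[OF fin that(2)] assms(5) by linarith
      ultimately show ?thesis unfolding tar_vertices_def by blast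
    qed
    have "(S \<union> D - (S \<union> insert x D)) \<union> (S \<union> insert x D - (S \<union> D)) = {x}"
      using insert.hyps(2) D by auto
    then have "tar_adj V E k (S \<union> D) (S \<union> insert x D)"
      unfolding tar_adj_def using D assms(3) by (auto intro!: vertex)
    with insert.IH[OF D(1)] show ?case
      by (rule rtranclp.rtrancl_into_rtrancl)
  qed
  from this[of "T - S"] assms(3) show ?thesis by (simp add: Un_absorb1)
qed

lemma tar_reachable_via_subset:
  assumes "finite V" "zero_forcing_set V E R" "R \<subseteq> S" "R \<subseteq> T" "S \<subseteq> V" "T \<subseteq> V"
    and "card S \<le> k" "card T \<le> k"
  shows "(tar_adj V E k)\<^sup>*\<^sup>* S T"
proof -
  have "(tar_adj V E k)\<^sup>*\<^sup>* R S" "(tar_adj V E k)\<^sup>*\<^sup>* R T"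
    using tar_reachable_superset assms by blast+
  then show ?thesis
    by (blast intro: tar_reachable_sym rtranclp_trans)
qed

lemma tar_connectedI:
  assumes "R \<in> tar_vertices V E k"
    and "\<And>S. S \<in> tar_vertices V E k \<Longrightarrow> (tar_adj V E k)\<^sup>*\<^sup>* S R"
  shows "tar_connected V E k"
  unfolding tar_connected_def
  using assms by (blast intro: tar_reachable_sym rtranclp_trans)

lemma not_tar_connected_isolated:
  assumes "S \<in> tar_vertices V E k" "T \<in> tar_vertices V E k" "S \<noteq> T"
    and "\<And>X. \<not> tar_adj V E k S X"
  shows "\<not> tar_connected V E k"
proof
  assume "tar_connected V E k"
  with assms(1,2) have "(tar_adj V E k)\<^sup>*\<^sup>* S T"
    unfolding tar_connected_def by blast
  with assms(3,4) show False
    by (blast elim: converse_rtranclpE)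
qed

lemma not_tar_connected_minimum:
  assumes "finite V" "S \<in> tar_vertices V E k" "T \<in> tar_vertices V E k" "S \<noteq> T"
    and "\<And>X. zero_forcing_set V E X \<Longrightarrow> k \<le> card X"
  shows "\<not> tar_connected V E k"
proof (rule not_tar_connected_isolated[OF assms(2-4)])
  have size: "card X = k" "finite X" if "X \<in> tar_vertices V E k" for X
  proof -
    from that have "zero_forcing_set V E X" "card X \<le> k"
      unfolding tar_vertices_def by auto
    then show "card X = k" "finite X"
      using assms(5) zero_forcing_set_finite[OF assms(1)] by (auto intro: le_antisym)
  qed
  fix X
  show "\<not> tar_adj V E k S X"
  proof
    assume adj: "tar_adj V E k S X"
    then have "X \<in> tar_vertices V E k" unfolding tar_adj_def by blast
    from adj show False
    proof (cases rule: tar_adj_cases)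
      case (1 x)
      then show False using size[OF assms(2)] size[OF \<open>X \<in> _\<close>] by (metis card_Diff1_less less_irrefl)
    next
      case (2 x)
      then show False using size[OF assms(2)] size[OF \<open>X \<in> _\<close>] by simp
    qed
  qed
qed

lemma tar_connected_ge_card_minus_one:
  assumes "finite V" "w \<in> V" "\<And>v. v \<in> V \<Longrightarrow> zero_forcing_set V E (V - {w, v})"
    and "card V - 1 \<le> k"
  shows "tar_connected V E k"
proof (rule tar_connectedI)
  have root: "zero_forcing_set V E (V - {w})"
    using assms(3)[OF assms(2)] by simp
  have card_co1: "card (V - {v}) \<le> k" if "v \<in> V" for v
    using assms(1,4) that by (simp add: card_Diff_singleton)
  show "V - {w} \<in> tar_vertices V E k"
    unfolding tar_vertices_def using root card_co1[OF assms(2)] by blast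
  fix S assume "S \<in> tar_vertices V E k"
  then have zS: "zero_forcing_set V E S" and SV: "S \<subseteq> V" and cS: "card S \<le> k"
    unfolding tar_vertices_def zero_forcing_set_def by auto
  show "(tar_adj V E k)\<^sup>*\<^sup>* S (V - {w})"
  proof (cases "S = V")
    case True
    show ?thesis
      by (rule tar_reachable_via_subset[OF assms(1) root]) (use True cS card_co1 assms(2) in auto)
  next
    case False
    then obtain v where v: "v \<in> V" "v \<notin> S" using SV by blast
    have "(tar_adj V E k)\<^sup>*\<^sup>* S (V - {v})"
      by (rule tar_reachable_via_subset[OF assms(1) zS]) (use v SV cS card_co1 in auto)
    also have "(tar_adj V E k)\<^sup>*\<^sup>* (V - {v}) (V - {w})"
      by (rule tar_reachable_via_subset[OF assms(1) assms(3)[OF v(1)]])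
        (use v card_co1 assms(2) in auto)
    finally show ?thesis .
  qed
qed

lemma zf_number_eqI:
  assumes "zero_forcing_set V E S" "card S = k"
    and "\<And>T. zero_forcing_set V E T \<Longrightarrow> k \<le> card T"
  shows "zf_number V E = k"
  unfolding zf_number_def
  by (rule Least_equality) (use assms in auto)

lemma z0_lower_eqI:
  assumes "tar_connected V E k" "\<And>j. j < k \<Longrightarrow> \<not> tar_connected V E j"
  shows "z0_lower V E = k"
  unfolding z0_lower_def
  by (rule Least_equality) (use assms in \<open>auto simp: not_less[symmetric]\<close>)

lemma z0_eqI:
  assumes "\<And>i. Suc j \<le> i \<Longrightarrow> i \<le> card V \<Longrightarrow> tar_connected V E i"
    and "\<not> tar_connected V E j" "j \<le> card V"
  shows "z0 V E = Suc j"
  unfolding z0_def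
proof (rule Least_equality)
  show "\<forall>i. Suc j \<le> i \<and> i \<le> card V \<longrightarrow> tar_connected V E i"
    using assms(1) by blast
  fix k assume "\<forall>i. k \<le> i \<and> i \<le> card V \<longrightarrow> tar_connected V E i"
  with assms(2,3) show "Suc j \<le> k"
    by (metis not_less_eq_eq)
qed

lemma H_vertices_eq: "H_vertices r = {..r+5}"
  unfolding H_vertices_def by (auto; presburger)

lemma H_edges_eq:
  "H_edges r = {{0,1},{0,3},{0,4},{0,5},{1,2},{1,3},{1,4},{1,5},{2,3},{2,4},{2,5},{3,4},{4,5}}
     \<union> {{v, u} | v u. v \<in> {3, 4, 5} \<and> u \<in> {6..r+5}}"
proof -
  have "{{v, 5 + k} | v k. v \<in> {3, 4, 5} \<and> 1 \<le> k \<and> k \<le> r}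
      = {{v, u} | v u. v \<in> {3, 4, 5} \<and> u \<in> {6..r+5}}" (is "?L = ?R")
  proof (intro equalityI subsetI)
    fix e assume "e \<in> ?L"
    then obtain v k where "e = {v, 5 + k}" "v \<in> {3, 4, 5}" "1 \<le> k" "k \<le> r" by blast
    then show "e \<in> ?R" by (intro CollectI exI[of _ v] exI[of _ "5 + k"]) auto
  next
    fix e assume "e \<in> ?R"
    then obtain v u where "e = {v, u}" "v \<in> {3, 4, 5}" "u \<in> {6..r+5}" by blast
    then show "e \<in> ?L" by (intro CollectI exI[of _ v] exI[of _ "u - 5"]) auto
  qed
  then show ?thesis unfolding H_edges_def by simp
qed

(* Vertex 1 is written Suc 0, the simp normal form of (1::nat). *)
lemma H_nbrs:
  "nbrs (H_edges r) 0 = {1, 3, 4, 5}"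
  "nbrs (H_edges r) (Suc 0) = {0, 2, 3, 4, 5}"
  "nbrs (H_edges r) 2 = {1, 3, 4, 5}"
  "nbrs (H_edges r) 3 = {0, 1, 2, 4} \<union> {6..r+5}"
  "nbrs (H_edges r) 4 = {0, 1, 2, 3, 5} \<union> {6..r+5}"
  "nbrs (H_edges r) 5 = {0, 1, 2, 4} \<union> {6..r+5}"
  "u \<in> {6..r+5} \<Longrightarrow> nbrs (H_edges r) u = {3, 4, 5}"
  unfolding nbrs_def H_edges_eq by (auto simp: doubleton_eq_iff)

lemma H_edges_subset: "e \<in> H_edges r \<Longrightarrow> e \<subseteq> H_vertices r"
  unfolding H_edges_eq H_vertices_eq by auto

lemma H_vertex_cases:
  assumes "v \<in> H_vertices r"
  obtains "v = 0" | "v = 1" | "v = 2" | "v = 3" | "v = 4" | "v = 5" | "v \<in> {6..r+5}"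
proof -
  have "v \<le> 5 \<or> v \<in> {6..r+5}" using assms by (auto simp: H_vertices_eq)
  moreover have "v \<in> {0, 1, 2, 3, 4, 5}" if "v \<le> 5" using that by auto
  ultimately show ?thesis using that by blast
qed

lemma H_fort_twins:
  "fort (H_vertices r) (H_edges r) {0, 2}"
  "fort (H_vertices r) (H_edges r) {3, 5}"
  "u \<in> {6..r+5} \<Longrightarrow> v \<in> {6..r+5} \<Longrightarrow> u \<noteq> v \<Longrightarrow>
     fort (H_vertices r) (H_edges r) {u, v}"
  by (rule fort_twins; simp add: H_vertices_eq H_nbrs)+

lemma H_fort_triple:
  assumes "c \<in> {3, 5}" "m \<in> {0, 1, 2} \<union> {6..r+5}"
  shows "fort (H_vertices r) (H_edges r) {4, c, m}"
proof (rule fortI)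
  show "{4, c, m} \<subseteq> H_vertices r"
    using assms by (auto simp: H_vertices_eq)
  fix u assume u: "u \<in> H_vertices r - {4, c, m}"
  show "\<exists>x y. x \<noteq> y \<and> x \<in> {4, c, m} \<inter> nbrs (H_edges r) u
    \<and> y \<in> {4, c, m} \<inter> nbrs (H_edges r) u"
  proof (cases "u \<in> {3, 5}")
    case True
    then have "{4, m} \<subseteq> nbrs (H_edges r) u"
      using assms by (auto simp: H_nbrs)
    moreover have "m \<noteq> 4" using assms(2) by auto
    ultimately show ?thesis by (intro exI[of _ 4] exI[of _ m]) auto
  next
    case False
    from u have "u \<in> H_vertices r" by blast
    then have "{4, c} \<subseteq> nbrs (H_edges r) u"
      by (cases rule: H_vertex_cases) (use u False assms(1) in \<open>auto simp: H_nbrs\<close>)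
    moreover have "c \<noteq> 4" using assms(1) by auto
    ultimately show ?thesis by (intro exI[of _ 4] exI[of _ c]) auto
  qed
qed simp

lemma H_zf_blue_force:
  assumes "zf_blue (H_vertices r) (H_edges r) S u" "w \<in> nbrs (H_edges r) u"
    and "\<And>x. x \<in> nbrs (H_edges r) u - {w} \<Longrightarrow> zf_blue (H_vertices r) (H_edges r) S x"
  shows "zf_blue (H_vertices r) (H_edges r) S w"
  using zf_blue_force_nbrs[OF _ assms] H_edges_subset by blast

lemma H_zero_forcing_minimal:
  assumes "2 \<le> r" "a \<in> {0, 2}" "c \<in> {3, 4, 5}" "d \<in> {3, 4, 5}" "c \<noteq> d" "u \<in> {6..r+5}"
  shows "zero_forcing_set (H_vertices r) (H_edges r) ({a, c, d} \<union> ({6..r+5} - {u}))"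
    (is "zero_forcing_set _ _ ?S")
proof -
  let ?E = "H_edges r"
  let ?blue = "zf_blue (H_vertices r) ?E ?S"
  have init: "?blue x" if "x \<in> ?S" for x
    using that by (rule zf_blue.init)
  have leaf: "?blue x" if "x \<in> {6..r+5} - {u}" for x
    using that init by blast
  define u' where "u' = (if u = 6 then 7 else (6::nat))"
  have u': "u' \<in> {6..r+5} - {u}"
    using assms(1,6) unfolding u'_def by auto
  have mid: "?blue x" if x: "x \<in> {3, 4, 5}" for x
  proof (cases "x \<in> {c, d}")
    case True
    then show ?thesis by (blast intro: init)
  next
    case False
    show ?thesis
    proof (rule H_zf_blue_force[OF leaf[OF u']])
      show "x \<in> nbrs ?E u'"
        using u' x by (simp add: H_nbrs)
      fix y assume "y \<in> nbrs ?E u' - {x}"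
      then have "y \<in> {3, 4, 5}" "y \<noteq> x"
        using u' by (auto simp: H_nbrs)
      then have "y \<in> {c, d}"
        using x False assms(3-5) by (simp only: insert_iff empty_iff simp_thms) (elim disjE; simp)
      then show "?blue y" by (blast intro: init)
    qed
  qed
  have one: "?blue 1"
  proof (rule H_zf_blue_force[of _ _ a])
    show "?blue a" by (rule init) simp
    have "nbrs ?E a = {1, 3, 4, 5}"
      using assms(2) by (auto simp: H_nbrs)
    then show "1 \<in> nbrs ?E a" "\<And>x. x \<in> nbrs ?E a - {1} \<Longrightarrow> ?blue x"
      using mid by auto
  qed
  have zero_two: "?blue x" if x: "x \<in> {0, 2}" for x
  proof (cases "x = a")
    case True
    then show ?thesis by (blast intro: init)
  next
    case False
    show ?thesis
    proof (rule H_zf_blue_force[OF one])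
      show "x \<in> nbrs ?E 1"
        using x by (auto simp: H_nbrs)
      fix y assume "y \<in> nbrs ?E 1 - {x}"
      then have "y = a \<or> y \<in> {3, 4, 5}"
        using x False assms(2) by (auto simp: H_nbrs)
      then show "?blue y"
        using mid init by auto
    qed
  qed
  have missing_leaf: "?blue u"
  proof (rule H_zf_blue_force[OF mid[of 4]])
    show "u \<in> nbrs ?E 4"
      using assms(6) by (simp add: H_nbrs)
    fix y assume "y \<in> nbrs ?E 4 - {u}"
    then have "y \<in> {0, 2} \<or> y = 1 \<or> y \<in> {3, 4, 5} \<or> y \<in> {6..r+5} - {u}"
      by (auto simp: H_nbrs)
    then show "?blue y"
      using zero_two one mid leaf by blast
  qed simp
  show ?thesis
    unfolding zero_forcing_set_def
  proof (intro conjI ballI)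
    show "?S \<subseteq> H_vertices r"
      using assms by (auto simp: H_vertices_eq)
    fix v assume "v \<in> H_vertices r"
    then show "?blue v"
      by (cases rule: H_vertex_cases) (use zero_two one mid leaf missing_leaf in auto)
  qed
qed

lemma H_zero_forcing_special:
  "zero_forcing_set (H_vertices r) (H_edges r) ({0, 1, 2, 3} \<union> {6..r+5})"
  (is "zero_forcing_set _ _ ?S")
proof -
  let ?E = "H_edges r"
  let ?blue = "zf_blue (H_vertices r) ?E ?S"
  have init: "?blue x" if "x \<in> ?S" for x
    using that by (rule zf_blue.init)
  have four: "?blue 4"
  proof (rule H_zf_blue_force[of _ _ 3])
    show "?blue 3" by (rule init) simp
    show "4 \<in> nbrs ?E 3" by (simp add: H_nbrs)
    fix y assume "y \<in> nbrs ?E 3 - {4}"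
    then show "?blue y" by (intro init) (auto simp: H_nbrs)
  qed
  have five: "?blue 5"
  proof (rule H_zf_blue_force[of _ _ 0])
    show "?blue 0" by (rule init) simp
    show "5 \<in> nbrs ?E 0" by (simp add: H_nbrs)
    fix y assume "y \<in> nbrs ?E 0 - {5}"
    then have "y \<in> ?S \<or> y = 4" by (auto simp: H_nbrs)
    then show "?blue y" using init four by blast
  qed
  show ?thesis
    unfolding zero_forcing_set_def
  proof (intro conjI ballI)
    show "?S \<subseteq> H_vertices r"
      by (auto simp: H_vertices_eq)
    fix v assume "v \<in> H_vertices r"
    then show "?blue v"
      by (cases rule: H_vertex_cases) (use init four five in auto)
  qed
qed

lemma H_zero_forcing_cases:
  assumes "zero_forcing_set (H_vertices r) (H_edges r) S"
  obtains a c d where "a \<in> {0, 2}" "c \<in> {3, 4, 5}" "d \<in> {3, 4, 5}" "c \<noteq> d" "{a, c, d} \<subseteq> S"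
  | "{0, 1, 2} \<union> {6..r+5} \<subseteq> S" "S \<inter> {3, 5} \<noteq> {}"
proof -
  have meets: "S \<inter> F \<noteq> {}" if "fort (H_vertices r) (H_edges r) F" for F
    using zero_forcing_set_meets_fort[OF assms that] .
  obtain a where a: "a \<in> {0, 2}" "a \<in> S"
    using meets[OF H_fort_twins(1)] by blast
  obtain c where c: "c \<in> {3, 5}" "c \<in> S"
    using meets[OF H_fort_twins(2)] by blast
  consider "4 \<in> S" | "{3, 5} \<subseteq> S" | c' where "c' \<in> {3, 5}" "c' \<notin> S" "4 \<notin> S"
    by blast
  then show ?thesis
  proof cases
    case 1
    with a c show ?thesis by (intro that(1)[of a c 4]) auto
  next
    case 2
    with a show ?thesis by (intro that(1)[of a 3 5]) auto
  next
    case (3 c')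
    have "m \<in> S" if "m \<in> {0, 1, 2} \<union> {6..r+5}" for m
      using meets[OF H_fort_triple[OF 3(1) that]] 3(2,3) by blast
    with c show ?thesis by (intro that(2)) blast+
  qed
qed

lemma H_zero_forcing_leaves:
  assumes "zero_forcing_set (H_vertices r) (H_edges r) S" "1 \<le> r"
  obtains u where "u \<in> {6..r+5}" "{6..r+5} - {u} \<subseteq> S"
proof (cases "{6..r+5} \<subseteq> S")
  case True
  with assms(2) show ?thesis by (intro that[of 6]) auto
next
  case False
  then obtain u where u: "u \<in> {6..r+5}" "u \<notin> S" by blast
  have "{6..r+5} - {u} \<subseteq> S"
  proof
    fix v assume "v \<in> {6..r+5} - {u}"
    with u show "v \<in> S"
      using zero_forcing_set_meets_fort[OF assms(1) H_fort_twins(3)[of u r v]] by auto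
  qed
  with u(1) show ?thesis by (rule that)
qed

lemma H_card_minimal:
  assumes "1 \<le> r" "a \<in> {0, 2}" "c \<in> {3, 4, 5}" "d \<in> {3, 4, 5}" "c \<noteq> d" "u \<in> {6..r+5}"
  shows "card ({a, c, d} \<union> ({6..r+5} - {u})) = r + 2"
proof -
  have "{a, c, d} \<inter> ({6..r+5} - {u}) = {}"
    using assms(2-4) by auto
  then have "card ({a, c, d} \<union> ({6..r+5} - {u})) = card {a, c, d} + card ({6..r+5} - {u})"
    by (intro card_Un_disjoint) auto
  moreover have "card {a, c, d} = 3"
    using assms(2-5) by auto
  moreover have "card ({6..r+5} - {u}) = r - 1"
    using assms(6) by simp
  ultimately show ?thesis
    using assms(1) by simp
qed

lemma H_card_special:
  assumes "{0, 1, 2} \<union> {6..r+5} \<subseteq> S" "S \<inter> {3, 5} \<noteq> {}" "finite S"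
  shows "r + 4 \<le> card S"
proof -
  obtain c where c: "c \<in> {3, 5}" "c \<in> S"
    using assms(2) by blast
  have "card ({0, 1, 2, c} \<union> {6..r+5}) = r + 4"
    using c(1) by (subst card_Un_disjoint) auto
  moreover have "{0, 1, 2, c} \<union> {6..r+5} \<subseteq> S"
    using assms(1) c(2) by auto
  ultimately show ?thesis
    using card_mono[OF assms(3)] by metis
qed

lemma H_zero_forcing_small:
  assumes "1 \<le> r" "zero_forcing_set (H_vertices r) (H_edges r) S" "card S \<le> r + 3"
  obtains a c d u where "a \<in> {0, 2}" "c \<in> {3, 4, 5}" "d \<in> {3, 4, 5}" "c \<noteq> d" "u \<in> {6..r+5}"
    "{a, c, d} \<union> ({6..r+5} - {u}) \<subseteq> S"
proof -
  have "finite S"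
    using zero_forcing_set_finite[OF _ assms(2)] by (simp add: H_vertices_eq)
  obtain u where u: "u \<in> {6..r+5}" "{6..r+5} - {u} \<subseteq> S"
    using H_zero_forcing_leaves[OF assms(2,1)] .
  from assms(2) show ?thesis
  proof (cases rule: H_zero_forcing_cases)
    case (1 a c d)
    with u show ?thesis by (intro that[of a c d u]) auto
  next
    case 2
    with H_card_special[OF 2 \<open>finite S\<close>] assms(3) show ?thesis by simp
  qed
qed

lemma H_zero_forcing_card_ge:
  assumes "1 \<le> r" "zero_forcing_set (H_vertices r) (H_edges r) S"
  shows "r + 2 \<le> card S"
proof (cases "card S \<le> r + 3")
  case True
  then obtain a c d u where "a \<in> {0, 2}" "c \<in> {3, 4, 5}" "d \<in> {3, 4, 5}" "c \<noteq> d"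
    "u \<in> {6..r+5}" and sub: "{a, c, d} \<union> ({6..r+5} - {u}) \<subseteq> S"
    by (rule H_zero_forcing_small[OF assms])
  then have "card ({a, c, d} \<union> ({6..r+5} - {u})) = r + 2"
    by (intro H_card_minimal assms(1))
  moreover have "finite S"
    using zero_forcing_set_finite[OF _ assms(2)] by (simp add: H_vertices_eq)
  ultimately show ?thesis
    using card_mono[OF _ sub] by simp
qed simp

lemma card_Un_set_le: "card (set xs \<union> Y) \<le> length xs + card Y"
  using card_Un_le[of "set xs" Y] card_length[of xs] by linarith

lemma H_tar_reachable_r_plus_3:
  assumes "2 \<le> r" "S \<in> tar_vertices (H_vertices r) (H_edges r) (r + 3)"
  shows "(tar_adj (H_vertices r) (H_edges r) (r + 3))\<^sup>*\<^sup>* S ({0, 3, 4, 5} \<union> ({6..r+5} - {6}))"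
proof -
  let ?V = "H_vertices r" and ?E = "H_edges r" and ?U = "{6..r+5}" and ?W = "{6..r+5} - {6}"
  let ?reach = "(tar_adj ?V ?E (r + 3))\<^sup>*\<^sup>*"
  have r1: "1 \<le> r"
    using assms(1) by simp
  have fin: "finite ?V"
    by (simp add: H_vertices_eq)
  have min_W: "zero_forcing_set ?V ?E ({a, c, d} \<union> ?W)"
    if "a \<in> {0, 2}" "c \<in> {3, 4, 5}" "d \<in> {3, 4, 5}" "c \<noteq> d" for a c d
    by (rule H_zero_forcing_minimal) (use assms that in auto)
  from assms(2) have zS: "zero_forcing_set ?V ?E S" and cS: "card S \<le> r + 3"
    unfolding tar_vertices_def by auto
  then have SV: "S \<subseteq> ?V" unfolding zero_forcing_set_def by blast
  obtain a c d u where acd: "a \<in> {0, 2}" "c \<in> {3, 4, 5}" "d \<in> {3, 4, 5}" "c \<noteq> d"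
    and u: "u \<in> ?U" and sub: "{a, c, d} \<union> (?U - {u}) \<subseteq> S"
    by (rule H_zero_forcing_small[OF r1 zS cS])
  define S1 where "S1 = {a, c, d} \<union> ?U"
  define S2 where "S2 = {0, a, c, d} \<union> ?W"
  define R where "R = {0, 3, 4, 5} \<union> ?W"
  have S1: "card S1 \<le> r + 3" "S1 \<subseteq> ?V"
    using card_Un_set_le[of "[a, c, d]" ?U] acd unfolding S1_def by (auto simp: H_vertices_eq)
  have S2: "card S2 \<le> r + 3" "S2 \<subseteq> ?V"
    using card_Un_set_le[of "[0, a, c, d]" ?W] assms(1) acd unfolding S2_def
    by (auto simp: H_vertices_eq)
  have R: "card R \<le> r + 3" "R \<subseteq> ?V"
    using card_Un_set_le[of "[0, 3, 4, 5]" ?W] assms(1) unfolding R_def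
    by (auto simp: H_vertices_eq)
  have "{a, c, d} \<union> (?U - {u}) \<subseteq> S1" "{a, c, d} \<union> ?W \<subseteq> S1" "{a, c, d} \<union> ?W \<subseteq> S2"
    "{0, c, d} \<union> ?W \<subseteq> S2" "{0, c, d} \<union> ?W \<subseteq> R"
    using acd unfolding S1_def S2_def R_def by auto
  note incl = this
  have "?reach S S1"
    using tar_reachable_via_subset[OF fin H_zero_forcing_minimal[OF assms(1) acd u]
        sub incl(1) SV S1(2) cS S1(1)] .
  also have "?reach S1 S2"
    using tar_reachable_via_subset[OF fin min_W[OF acd] incl(2,3) S1(2) S2(2) S1(1) S2(1)] .
  also have "?reach S2 R"
    using tar_reachable_via_subset[OF fin min_W[OF _ acd(2-4)] incl(4,5) S2(2) R(2) S2(1) R(1)]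
    by simp
  finally show ?thesis
    unfolding R_def .
qed

lemma H_tar_connected_r_plus_3:
  assumes "2 \<le> r"
  shows "tar_connected (H_vertices r) (H_edges r) (r + 3)"
proof (rule tar_connectedI[OF _ H_tar_reachable_r_plus_3[OF assms]])
  let ?R = "{0, 3, 4, 5} \<union> ({6..r+5} - {6})"
  have "zero_forcing_set (H_vertices r) (H_edges r) ?R"
    by (rule zero_forcing_set_mono[OF H_zero_forcing_minimal[OF assms, of 0 3 4 6]])
      (use assms in \<open>auto simp: H_vertices_eq\<close>)
  moreover have "card ?R \<le> r + 3"
    using card_Un_set_le[of "[0, 3, 4, 5]" "{6..r+5} - {6}"] assms by simp
  ultimately show "?R \<in> tar_vertices (H_vertices r) (H_edges r) (r + 3)"
    unfolding tar_vertices_def by blast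
qed

lemma H_tar_connected_ge_r_plus_5:
  assumes "2 \<le> r" "r + 5 \<le> k"
  shows "tar_connected (H_vertices r) (H_edges r) k"
proof (rule tar_connected_ge_card_minus_one)
  show "finite (H_vertices r)" "1 \<in> H_vertices r" "card (H_vertices r) - 1 \<le> k"
    using assms by (auto simp: H_vertices_eq)
  fix v assume v: "v \<in> H_vertices r"
  define a where "a = (if v = 0 then 2 else (0::nat))"
  define c where "c = (if v = 3 then 4 else (3::nat))"
  define d where "d = (if v = 5 then 4 else (5::nat))"
  define u where "u = (if v \<in> {6..r+5} then v else (6::nat))"
  have "a \<in> {0, 2}" "c \<in> {3, 4, 5}" "d \<in> {3, 4, 5}" "c \<noteq> d" "u \<in> {6..r+5}"
    using assms(1) unfolding a_def c_def d_def u_def by auto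
  from H_zero_forcing_minimal[OF assms(1) this]
  show "zero_forcing_set (H_vertices r) (H_edges r) (H_vertices r - {1, v})"
  proof (rule zero_forcing_set_mono)
    show "{a, c, d} \<union> ({6..r+5} - {u}) \<subseteq> H_vertices r - {1, v}"
      using v unfolding a_def c_def d_def u_def by (auto simp: H_vertices_eq)
  qed simp
qed

lemma H_not_tar_connected_r_plus_4:
  assumes "2 \<le> r"
  shows "\<not> tar_connected (H_vertices r) (H_edges r) (r + 4)"
proof -
  let ?V = "H_vertices r" and ?E = "H_edges r"
  define T where "T = {0, 1, 2, 3} \<union> {6..r+5}"
  define T' where "T' = {0, 3, 4} \<union> ({6..r+5} - {6})"
  have "finite T" unfolding T_def by simp
  have cT: "card T = r + 4"
    unfolding T_def by (subst card_Un_disjoint) auto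
  have "T \<in> tar_vertices ?V ?E (r + 4)"
    unfolding tar_vertices_def T_def using H_zero_forcing_special cT[unfolded T_def] by simp
  moreover have "T' \<in> tar_vertices ?V ?E (r + 4)"
    unfolding tar_vertices_def T'_def
    using H_zero_forcing_minimal[OF assms, of 0 3 4 6] H_card_minimal[of r 0 3 4 6] assms by simp
  moreover have "T \<noteq> T'"
    unfolding T_def T'_def by auto
  moreover have "\<not> tar_adj ?V ?E (r + 4) T X" for X
  proof
    assume adj: "tar_adj ?V ?E (r + 4) T X"
    then have X: "zero_forcing_set ?V ?E X" "card X \<le> r + 4"
      unfolding tar_adj_def tar_vertices_def by auto
    from adj show False
    proof (cases rule: tar_adj_cases)
      case (1 x)
      have "4 \<notin> X" "5 \<notin> X" "x \<notin> X"
        using 1 unfolding T_def by auto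
      show False
      proof (cases "x = 3")
        case True
        with zero_forcing_set_meets_fort[OF X(1) H_fort_twins(2)] \<open>5 \<notin> X\<close> \<open>x \<notin> X\<close>
        show False by blast
      next
        case False
        with 1 have "x \<in> {0, 1, 2} \<union> {6..r+5}"
          unfolding T_def by auto
        with zero_forcing_set_meets_fort[OF X(1) H_fort_triple[of 5 x]]
          \<open>4 \<notin> X\<close> \<open>5 \<notin> X\<close> \<open>x \<notin> X\<close>
        show False by blast
      qed
    next
      case (2 x)
      with \<open>finite T\<close> cT X(2) show False by simp
    qed
  qed
  ultimately show ?thesis
    by (rule not_tar_connected_isolated)
qed

lemma H_not_tar_connected_le_r_plus_2:
  assumes "2 \<le> r" "k \<le> r + 2"
  shows "\<not> tar_connected (H_vertices r) (H_edges r) k"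
proof
  let ?V = "H_vertices r" and ?E = "H_edges r"
  assume conn: "tar_connected ?V ?E k"
  have ge: "r + 2 \<le> card X" if "zero_forcing_set ?V ?E X" for X
    using H_zero_forcing_card_ge[OF _ that] assms(1) by simp
  from conn obtain S where "S \<in> tar_vertices ?V ?E k"
    unfolding tar_connected_def by blast
  with ge assms(2) have k: "k = r + 2"
    unfolding tar_vertices_def by fastforce
  have minimal: "{a, 3, 4} \<union> ({6..r+5} - {6}) \<in> tar_vertices ?V ?E k" if "a \<in> {0, 2}" for a
    unfolding tar_vertices_def k
    using H_zero_forcing_minimal[OF assms(1) that, of 3 4 6] H_card_minimal[of r a 3 4 6] assms(1) that
    by simp
  have "\<not> tar_connected ?V ?E k"
  proof (rule not_tar_connected_minimum[OF _ minimal minimal])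
    show "{0, 3, 4} \<union> ({6..r+5} - {6}) \<noteq> {2, 3, 4} \<union> ({6..r+5} - {6})"
    proof
      assume eq: "{0, 3, 4} \<union> ({6..r+5} - {6}) = {2, 3, 4} \<union> ({6..r+5} - {6})"
      have "(0::nat) \<in> {0, 3, 4} \<union> ({6..r+5} - {6})" by simp
      then have "(0::nat) \<in> {2, 3, 4} \<union> ({6..r+5} - {6})" by (simp only: eq)
      then show False by simp
    qed
  qed (use ge k in \<open>auto simp: H_vertices_eq\<close>)
  with conn show False by blast
qed

theorem proposition3p9:
  fixes r :: nat
  assumes "r \<ge> 2"
  shows "zf_number (H_vertices r) (H_edges r) = r + 2
       \<and> z0_lower (H_vertices r) (H_edges r) = r + 3
       \<and> z0 (H_vertices r) (H_edges r) = r + 5"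
proof (intro conjI)
  have r1: "1 \<le> r" using assms by simp
  show "zf_number (H_vertices r) (H_edges r) = r + 2"
    by (rule zf_number_eqI[OF H_zero_forcing_minimal[OF assms, of 0 3 4 6]
          H_card_minimal[OF r1, of 0 3 4 6] H_zero_forcing_card_ge[OF r1]])
      (use assms in auto)
  show "z0_lower (H_vertices r) (H_edges r) = r + 3"
    by (rule z0_lower_eqI[OF H_tar_connected_r_plus_3[OF assms]])
      (use H_not_tar_connected_le_r_plus_2[OF assms] in simp)
  have "z0 (H_vertices r) (H_edges r) = Suc (r + 4)"
    by (rule z0_eqI) (use H_tar_connected_ge_r_plus_5[OF assms] H_not_tar_connected_r_plus_4[OF assms] in
      \<open>auto simp: H_vertices_eq\<close>)
  then show "z0 (H_vertices r) (H_edges r) = r + 5" by simp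
qed

end
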